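(* In the setting below, assume $\int_{\bar B_R}|\eta|\,d\mu<\infty$, $\mu(\{x\})=0$ and $\int_{\bar B_r}|\eta-\eta(x)|\,d\mu>0$ for all $r>0$. Then $x$ is a Lebesgue point for $\eta$ with respect to $\mu$ if and only if there exist $\alpha\in(0,1)$ and an $\alpha$-sequence $(r_m)_{m\ge m_1}$ at $x$ such that $x$ is a Lebesgue point along $(r_m)_{m\ge m_1}$.
   Context: Let $(\mathcal{X},d)$ be a metric space with Borel $\sigma$-algebra, $\eta:\mathcal{X}\to\mathbb{R}$ measurable, and $\mu$ a Borel measure on $\mathcal{X}$. Fix $x\in\mathcal{X}$ with $\mu(\bar B_r)>0$ for all $r>0$, where $\bar B_r=\{x':d(x,x')\le r\}$, and fix $R>0$ with $\mu(\bar B_R)<\infty$. The point $x$ is a Lebesgue point for $\eta$ with respect to $\mu$ if $\frac{1}{\mu(\bar B_r)}\int_{\bar B_r}|\eta-\eta(x)|\,d\mu\to0$ as $r\to0^+$; for a sequence of strictly positive numbers $\rho_m\to0$, $x$ is a Lebesgue point along $(\rho_m)$ if $\frac{1}{\mu(\bar B_{\rho_m})}\int_{\bar B_{\rho_m}}|\eta-\eta(x)|\,d\mu\to0$ as $m\to\infty$. For $\alpha\in(0,1)$ and $r>0$ let $M(r)=\big(\int_{\bar B_r}|\eta-\eta(x)|\,d\mu\big)^{\alpha}\big(\mu(\bar B_r)\big)^{1-\alpha}$; choose $R_1\in(0,R)$ with $M(R_1)<M(R)$, let $m_1=\lceil 1/M(R_1)\rceil$, and for integers $m\ge m_1$ let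 $r_m=\sup\{r>0:M(r)<1/m\}$. Any sequence $(r_m)_{m\ge m_1}$ so obtained is called an $\alpha$-sequence at $x$. *)

theory Defs
  imports "HOL-Analysis.Analysis"
begin

definition dev_int :: "'a::metric_space measure \<Rightarrow> ('a \<Rightarrow> real) \<Rightarrow> 'a \<Rightarrow> real \<Rightarrow> ennreal" where
  "dev_int \<mu> \<eta> x r = (\<integral>\<^sup>+ y \<in> cball x r. ennreal \<bar>\<eta> y - \<eta> x\<bar> \<partial>\<mu>)"

text \<open>Mean of |eta - eta(x)| over the closed ball (used only where everything is finite).\<close>
definition ball_avg :: "'a::metric_space measure \<Rightarrow> ('a \<Rightarrow> real) \<Rightarrow> 'a \<Rightarrow> real \<Rightarrow> real" where
  "ball_avg \<mu> \<eta> x r = enn2real (dev_int \<mu> \<eta> x r) / measure \<mu> (cball x r)"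

definition lebesgue_point :: "'a::metric_space measure \<Rightarrow> ('a \<Rightarrow> real) \<Rightarrow> 'a \<Rightarrow> bool" where
  "lebesgue_point \<mu> \<eta> x \<longleftrightarrow> ((\<lambda>r. ball_avg \<mu> \<eta> x r) \<longlongrightarrow> 0) (at_right 0)"

definition lebesgue_point_along :: "'a::metric_space measure \<Rightarrow> ('a \<Rightarrow> real) \<Rightarrow> 'a \<Rightarrow> (nat \<Rightarrow> real) \<Rightarrow> nat \<Rightarrow> bool" where
  "lebesgue_point_along \<mu> \<eta> x \<rho> m0 \<longleftrightarrow>
     (\<forall>m\<ge>m0. \<rho> m > 0) \<and> \<rho> \<longlonglongrightarrow> 0 \<and> (\<lambda>m. ball_avg \<mu> \<eta> x (\<rho> m)) \<longlonglongrightarrow> 0"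

definition alphaM :: "'a::metric_space measure \<Rightarrow> ('a \<Rightarrow> real) \<Rightarrow> 'a \<Rightarrow> real \<Rightarrow> real \<Rightarrow> ennreal" where
  "alphaM \<mu> \<eta> x \<alpha> r =
     (if dev_int \<mu> \<eta> x r = \<infinity> \<or> emeasure \<mu> (cball x r) = \<infinity> then \<infinity>
      else ennreal (enn2real (dev_int \<mu> \<eta> x r) powr \<alpha> * measure \<mu> (cball x r) powr (1 - \<alpha>)))"

definition alpha_sequence :: "'a::metric_space measure \<Rightarrow> ('a \<Rightarrow> real) \<Rightarrow> 'a \<Rightarrow> real \<Rightarrow> real \<Rightarrow> (nat \<Rightarrow> real) \<Rightarrow> nat \<Rightarrow> bool" where
  "alpha_sequence \<mu> \<eta> x R \<alpha> r m1 \<longleftrightarrow>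
     (\<exists>R1. 0 < R1 \<and> R1 < R \<and> alphaM \<mu> \<eta> x \<alpha> R1 < alphaM \<mu> \<eta> x \<alpha> R \<and>
        m1 = nat \<lceil>1 / enn2real (alphaM \<mu> \<eta> x \<alpha> R1)\<rceil> \<and>
        (\<forall>m\<ge>m1. r m = Sup {s. 0 < s \<and> alphaM \<mu> \<eta> x \<alpha> s < ennreal (1 / real m)}))"

end

theory Submission
  imports Defs
begin

text \<open>Write D(r) for the integral of |\<eta> - \<eta>(x)| over the closed ball B(r), V(r) = \<mu>(B(r)) and
  M(r) = D(r)^\<alpha> V(r)^(1-\<alpha>). On [0, R) the function M is monotone, right-continuous, positive
  away from 0 and vanishes at 0 (as \<mu>{x} = 0). Hence the \<alpha>-sequence satisfies
  M(s) < 1/m \<le> M(r_m) for s < r_m, and r_m \<rightarrow> 0, so a Lebesgue point is one along (r_m).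
  Conversely, a small radius s lies in some [r_n, r_(n-1)), where M(s) < 1/(n-1) \<le> 2/n \<le> 2 M(r_n).
  Writing M = (D/V)^\<alpha> V and using V(r_n) \<le> V(s), this becomes
  D(s)/V(s) \<le> 2^(1/\<alpha>) D(r_n)/V(r_n): the averages over all small balls are controlled by those
  along (r_n).\<close>

lemma emeasure_cball_mono:
  fixes \<nu> :: "'a::metric_space measure"
  assumes "sets \<nu> = sets borel" "r \<le> s"
  shows "emeasure \<nu> (cball x r) \<le> emeasure \<nu> (cball x s)"
  using assms by (intro emeasure_mono subset_cball) auto

lemma tendsto_measure_cball_at_right:
  fixes \<nu> :: "'a::metric_space measure"
  assumes sets: "sets \<nu> = sets borel" and fin: "emeasure \<nu> (cball x R) < \<infinity>" and "c < R"
  shows "((\<lambda>r. measure \<nu> (cball x r)) \<longlongrightarrow> measure \<nu> (cball x c)) (at_right c)"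
proof (rule tendsto_at_right_sequentially[OF \<open>c < R\<close>])
  fix S :: "nat \<Rightarrow> real"
  assume S: "\<And>n. c < S n" "\<And>n. S n < R" "decseq S" "S \<longlonglongrightarrow> c"
  have "(\<lambda>n. measure \<nu> (cball x (S n))) \<longlonglongrightarrow> measure \<nu> (\<Inter>n. cball x (S n))"
  proof (rule Lim_measure_decseq)
    show "range (\<lambda>n. cball x (S n)) \<subseteq> sets \<nu>"
      unfolding sets by auto
    show "decseq (\<lambda>n. cball x (S n))"
      using \<open>decseq S\<close> unfolding decseq_def by (simp add: subset_cball)
    show "emeasure \<nu> (cball x (S n)) \<noteq> \<infinity>" for n
    proof -
      have "emeasure \<nu> (cball x (S n)) \<le> emeasure \<nu> (cball x R)"
        using S(2)[of n] by (intro emeasure_cball_mono[OF sets]) simp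
      then show ?thesis
        using fin by (auto simp: top_unique)
    qed
  qed
  also have "(\<Inter>n. cball x (S n)) = cball x c"
  proof (intro equalityI subsetI)
    fix y assume "y \<in> (\<Inter>n. cball x (S n))"
    then have "\<forall>n\<ge>0. dist x y \<le> S n"
      by simp
    then have "dist x y \<le> c"
      using LIMSEQ_le_const[OF \<open>S \<longlonglongrightarrow> c\<close>] by blast
    then show "y \<in> cball x c"
      by simp
  next
    fix y assume "y \<in> cball x c"
    then show "y \<in> (\<Inter>n. cball x (S n))"
      using S(1) by (auto intro: order_trans less_imp_le)
  qed
  finally show "(\<lambda>n. measure \<nu> (cball x (S n))) \<longlonglongrightarrow> measure \<nu> (cball x c)" .
qed

lemma ratio_le_of_powr_product_le:
  fixes \<alpha> C D1 V1 D2 V2 :: real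
  assumes "0 < \<alpha>" "0 < C" "0 < D1" "0 < V1" "0 < D2" "0 < V2" "V2 \<le> V1"
    and le: "D1 powr \<alpha> * V1 powr (1 - \<alpha>) \<le> C * (D2 powr \<alpha> * V2 powr (1 - \<alpha>))"
  shows "D1 / V1 \<le> C powr (1 / \<alpha>) * (D2 / V2)"
proof -
  have split: "D powr \<alpha> * V powr (1 - \<alpha>) = (D / V) powr \<alpha> * V" if "0 < D" "0 < V" for D V :: real
    using that by (simp add: powr_divide powr_diff)
  have "(D1 / V1) powr \<alpha> * V1 \<le> C * ((D2 / V2) powr \<alpha> * V2)"
    using le by (simp only: split assms)
  also have "\<dots> \<le> C * (D2 / V2) powr \<alpha> * V1"
    using assms by (simp add: mult_left_mono)
  finally have "(D1 / V1) powr \<alpha> \<le> C * (D2 / V2) powr \<alpha>"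
    using assms by simp
  then have "((D1 / V1) powr \<alpha>) powr (1 / \<alpha>) \<le> (C * (D2 / V2) powr \<alpha>) powr (1 / \<alpha>)"
    using assms by (intro powr_mono2) auto
  then show ?thesis
    using assms by (simp add: powr_powr powr_mult)
qed

definition level_sup :: "(real \<Rightarrow> ennreal) \<Rightarrow> nat \<Rightarrow> real" where
  "level_sup f m = Sup {s. 0 < s \<and> f s < ennreal (1 / real m)}"

text \<open>The radii \<open>level_sup f m\<close> (\<open>m \<ge> m1\<close>) are the \<open>r_m\<close> of an \<open>\<alpha>\<close>-sequence when \<open>f\<close> is \<open>alphaM\<close>;
  the assumptions are exactly what is used about \<open>M\<close>.\<close>
locale level_threshold =
  fixes f :: "real \<Rightarrow> ennreal" and R1 :: real and m1 :: nat
  assumes mono: "mono f"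
    and pos: "\<And>s. 0 < s \<Longrightarrow> 0 < f s"
    and tendsto_zero: "(f \<longlongrightarrow> 0) (at_right 0)"
    and right_cont: "\<And>c. 0 < c \<Longrightarrow> c \<le> R1 \<Longrightarrow> (f \<longlongrightarrow> f c) (at_right c)"
    and R1_pos: "0 < R1"
    and finite_R1: "f R1 < \<infinity>"
    and m1_eq: "m1 = nat \<lceil>1 / enn2real (f R1)\<rceil>"
begin

lemma
  assumes "m1 \<le> m"
  shows index_pos: "0 < m" and inverse_index_le_f_R1: "ennreal (1 / real m) \<le> f R1"
proof -
  define a where "a = enn2real (f R1)"
  have a: "0 < a" "f R1 = ennreal a"
    using pos[OF R1_pos] finite_R1 unfolding a_def by (auto simp: enn2real_positive_iff less_top)
  have "1 / a \<le> real m"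
    using real_nat_ceiling_ge[of "1 / a"] assms unfolding m1_eq a_def by linarith
  moreover have "0 < 1 / a"
    using a by simp
  ultimately have m: "0 < real m"
    by linarith
  then show "0 < m"
    by simp
  have "1 / real m \<le> a"
    using \<open>1 / a \<le> real m\<close> a m by (simp add: divide_le_eq mult.commute)
  then show "ennreal (1 / real m) \<le> f R1"
    using a by (simp add: ennreal_leI)
qed

lemma level_set_below_R1:
  assumes "m1 \<le> m" "f s < ennreal (1 / real m)"
  shows "s < R1"
proof (rule ccontr)
  assume "\<not> s < R1"
  then have "f R1 \<le> f s"
    using mono by (simp add: monoD)
  then show False
    using assms inverse_index_le_f_R1[OF assms(1)] by simp
qed

lemma level_set_nonempty:
  assumes "0 < m"
  shows "\<exists>s>0. f s < ennreal (1 / real m)"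
proof -
  have "\<forall>\<^sub>F s in at_right 0. f s < ennreal (1 / real m)"
    using tendsto_zero assms by (intro order_tendstoD(2)) auto
  then obtain b where "b > 0" "\<And>s. 0 < s \<Longrightarrow> s < b \<Longrightarrow> f s < ennreal (1 / real m)"
    unfolding eventually_at_right_field by blast
  then show ?thesis
    by (intro exI[of _ "b / 2"]) auto
qed

lemma level_set_bdd:
  assumes "m1 \<le> m"
  shows "bdd_above {s. 0 < s \<and> f s < ennreal (1 / real m)}"
proof (rule bdd_aboveI)
  fix s assume "s \<in> {s. 0 < s \<and> f s < ennreal (1 / real m)}"
  then have "s < R1"
    using level_set_below_R1[OF assms] by blast
  then show "s \<le> R1"
    by simp
qed

lemma level_sup_pos:
  assumes "m1 \<le> m"
  shows "0 < level_sup f m"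
proof -
  obtain s where s: "0 < s" "f s < ennreal (1 / real m)"
    using level_set_nonempty index_pos[OF assms] by blast
  then have "s \<le> level_sup f m"
    unfolding level_sup_def using level_set_bdd[OF assms] by (intro cSup_upper) auto
  then show ?thesis
    using s(1) by simp
qed

lemma level_sup_le:
  assumes "m1 \<le> m" "\<And>s. 0 < s \<Longrightarrow> f s < ennreal (1 / real m) \<Longrightarrow> s \<le> b"
  shows "level_sup f m \<le> b"
  unfolding level_sup_def
  using level_set_nonempty index_pos[OF assms(1)] assms(2) by (intro cSup_least) auto

lemma level_sup_le_R1: "m1 \<le> m \<Longrightarrow> level_sup f m \<le> R1"
  using level_sup_le level_set_below_R1 less_imp_le by blast

lemma less_level_sup_imp:
  assumes "m1 \<le> m" "s < level_sup f m"
  shows "f s < ennreal (1 / real m)"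
proof -
  obtain t where t: "0 < t" "f t < ennreal (1 / real m)" "s < t"
    using assms less_cSup_iff[OF _ level_set_bdd[OF assms(1)]] level_set_nonempty
      index_pos[OF assms(1)] unfolding level_sup_def by auto
  have "f s \<le> f t"
    using mono \<open>s < t\<close> by (simp add: monoD)
  then show ?thesis
    using t by simp
qed

lemma level_sup_le_value:
  assumes "m1 \<le> m"
  shows "ennreal (1 / real m) \<le> f (level_sup f m)"
proof (rule ccontr)
  define r where "r = level_sup f m"
  assume "\<not> ennreal (1 / real m) \<le> f (level_sup f m)"
  then have "f r < ennreal (1 / real m)"
    unfolding r_def by simp
  moreover have "(f \<longlongrightarrow> f r) (at_right r)"
    using right_cont level_sup_pos[OF assms] level_sup_le_R1[OF assms] unfolding r_def by blast
  ultimately have "\<forall>\<^sub>F s in at_right r. f s < ennreal (1 / real m)"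
    by (intro order_tendstoD(2))
  then obtain b where "r < b" "\<And>s. r < s \<Longrightarrow> s < b \<Longrightarrow> f s < ennreal (1 / real m)"
    unfolding eventually_at_right_field by blast
  then have "(r + b) / 2 \<in> {s. 0 < s \<and> f s < ennreal (1 / real m)}"
    using level_sup_pos[OF assms] unfolding r_def by auto
  then have "(r + b) / 2 \<le> r"
    using cSup_upper[OF _ level_set_bdd[OF assms]] unfolding r_def level_sup_def by blast
  then show False
    using \<open>r < b\<close> by simp
qed

lemma level_sup_tendsto_zero: "level_sup f \<longlonglongrightarrow> 0"
proof (rule order_tendstoI)
  show "\<forall>\<^sub>F m in sequentially. a < level_sup f m" if "a < 0" for a
    using eventually_ge_at_top[of m1]
    by eventually_elim (meson level_sup_pos less_trans that)
next
  fix e :: real assume "0 < e"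
  have "(\<lambda>m. ennreal (1 / real m)) \<longlonglongrightarrow> 0"
    using tendsto_ennrealI[OF lim_1_over_n] by simp
  then have "\<forall>\<^sub>F m in sequentially. ennreal (1 / real m) < f (e / 2)"
    using pos[of "e / 2"] \<open>0 < e\<close> by (intro order_tendstoD(2)) auto
  with eventually_ge_at_top[of m1]
  show "\<forall>\<^sub>F m in sequentially. level_sup f m < e"
  proof eventually_elim
    case (elim m)
    have "s < e / 2" if "0 < s" "f s < ennreal (1 / real m)" for s
    proof (rule ccontr)
      assume "\<not> s < e / 2"
      then have "f (e / 2) \<le> f s"
        using mono by (simp add: monoD)
      then show False
        using that elim by simp
    qed
    then have "level_sup f m \<le> e / 2"
      using level_sup_le[OF elim(1)] less_imp_le by blast
    then show ?case
      using \<open>0 < e\<close> by simp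
  qed
qed

lemma level_sup_crossing:
  assumes "m1 \<le> K" "0 < s" "s < level_sup f K"
  obtains k where "K \<le> k" "s < level_sup f k" "level_sup f (Suc k) \<le> s"
proof -
  obtain n0 where "K \<le> n0" "level_sup f n0 < s"
    using eventually_conj[OF eventually_ge_at_top order_tendstoD(2)[OF level_sup_tendsto_zero \<open>0 < s\<close>]]
    unfolding eventually_sequentially by blast
  then have ex: "\<exists>n. K \<le> n \<and> level_sup f n \<le> s"
    by (intro exI[of _ n0]) simp
  define n where "n = (LEAST n. K \<le> n \<and> level_sup f n \<le> s)"
  have n: "K \<le> n" "level_sup f n \<le> s"
    using LeastI_ex[OF ex] unfolding n_def by blast+
  have "K < n"
    using n assms(3) by (cases "n = K") auto
  define k where "k = n - 1"
  have k: "n = Suc k" "K \<le> k"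
    using \<open>K < n\<close> unfolding k_def by auto
  then have "\<not> (K \<le> k \<and> level_sup f k \<le> s)"
    unfolding n_def by (intro not_less_Least) simp
  then have "s < level_sup f k"
    using k(2) by simp
  then show ?thesis
    using that[OF k(2)] n(2) k(1) by simp
qed

lemma eventually_level_sup_bracket:
  "\<forall>\<^sub>F s in at_right 0. \<exists>n\<ge>N. level_sup f n \<le> s \<and> f s \<le> 2 * f (level_sup f n)"
proof -
  define K where "K = max N (Suc m1)"
  have K: "m1 \<le> K" "N \<le> K" "0 < K"
    unfolding K_def by auto
  have "\<exists>n\<ge>N. level_sup f n \<le> s \<and> f s \<le> 2 * f (level_sup f n)"
    if s: "0 < s" "s < level_sup f K" for s
  proof -
    obtain k where k: "K \<le> k" "s < level_sup f k" "level_sup f (Suc k) \<le> s"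
      using level_sup_crossing[OF K(1) s] .
    have "f s < ennreal (1 / real k)"
      using less_level_sup_imp k K by simp
    also have "\<dots> \<le> ennreal (2 * (1 / real (Suc k)))"
    proof (intro ennreal_leI)
      have "1 / real k = 2 / (2 * real k)"
        using k K by simp
      also have "\<dots> \<le> 2 / real (Suc k)"
        using k K by (intro divide_left_mono) auto
      finally show "1 / real k \<le> 2 * (1 / real (Suc k))"
        by simp
    qed
    also have "\<dots> = 2 * ennreal (1 / real (Suc k))"
      using ennreal_mult[of 2 "1 / real (Suc k)"] by simp
    also have "\<dots> \<le> 2 * f (level_sup f (Suc k))"
      using level_sup_le_value[of "Suc k"] k K by (intro mult_left_mono) auto
    finally show ?thesis
      using k K by (intro exI[of _ "Suc k"]) auto
  qed
  then show ?thesis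
    using level_sup_pos[OF K(1)] unfolding eventually_at_right_field by blast
qed

end

locale ball_setting =
  fixes \<mu> :: "'a::metric_space measure" and \<eta> :: "'a \<Rightarrow> real" and x :: 'a and R :: real
  assumes sets_eq: "sets \<mu> = sets borel"
    and eta_measurable: "\<eta> \<in> borel_measurable \<mu>"
    and ball_pos: "\<And>r. 0 < r \<Longrightarrow> 0 < emeasure \<mu> (cball x r)"
    and R_pos: "0 < R"
    and ball_finite: "emeasure \<mu> (cball x R) < \<infinity>"
    and ball_integrable: "(\<integral>\<^sup>+ y \<in> cball x R. ennreal \<bar>\<eta> y\<bar> \<partial>\<mu>) < \<infinity>"
    and centre_null: "emeasure \<mu> {x} = 0"
    and dev_int_pos: "\<And>r. 0 < r \<Longrightarrow> 0 < dev_int \<mu> \<eta> x r"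
begin

lemma sets_cball [measurable]: "cball x r \<in> sets \<mu>"
  using sets_eq by simp

declare eta_measurable [measurable]

abbreviation deviation :: "'a measure" where
  "deviation \<equiv> density \<mu> (\<lambda>y. ennreal \<bar>\<eta> y - \<eta> x\<bar>)"

abbreviation D :: "real \<Rightarrow> real" where
  "D r \<equiv> enn2real (dev_int \<mu> \<eta> x r)"

abbreviation V :: "real \<Rightarrow> real" where
  "V r \<equiv> measure \<mu> (cball x r)"

abbreviation M :: "real \<Rightarrow> real \<Rightarrow> real" where
  "M \<alpha> r \<equiv> D r powr \<alpha> * V r powr (1 - \<alpha>)"

lemma sets_deviation: "sets deviation = sets borel"
  using sets_eq by simp

lemma dev_int_eq_deviation: "dev_int \<mu> \<eta> x r = emeasure deviation (cball x r)"
  unfolding dev_int_def by (subst emeasure_density) auto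

lemma D_eq_deviation: "D r = measure deviation (cball x r)"
  unfolding measure_def dev_int_eq_deviation ..

lemma dev_int_R_finite: "dev_int \<mu> \<eta> x R < \<infinity>"
proof -
  have "dev_int \<mu> \<eta> x R
      \<le> (\<integral>\<^sup>+ y. ennreal \<bar>\<eta> y\<bar> * indicator (cball x R) y + ennreal \<bar>\<eta> x\<bar> * indicator (cball x R) y \<partial>\<mu>)"
    unfolding dev_int_def
  proof (intro nn_integral_mono)
    fix y
    have "ennreal \<bar>\<eta> y - \<eta> x\<bar> \<le> ennreal (\<bar>\<eta> y\<bar> + \<bar>\<eta> x\<bar>)"
      by (intro ennreal_leI) linarith
    also have "\<dots> = ennreal \<bar>\<eta> y\<bar> + ennreal \<bar>\<eta> x\<bar>"
      by (rule ennreal_plus) auto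
    finally have "ennreal \<bar>\<eta> y - \<eta> x\<bar> \<le> ennreal \<bar>\<eta> y\<bar> + ennreal \<bar>\<eta> x\<bar>" .
    then show "ennreal \<bar>\<eta> y - \<eta> x\<bar> * indicator (cball x R) y
      \<le> ennreal \<bar>\<eta> y\<bar> * indicator (cball x R) y + ennreal \<bar>\<eta> x\<bar> * indicator (cball x R) y"
      by (cases "y \<in> cball x R") simp_all
  qed
  also have "\<dots> = (\<integral>\<^sup>+ y \<in> cball x R. ennreal \<bar>\<eta> y\<bar> \<partial>\<mu>) + ennreal \<bar>\<eta> x\<bar> * emeasure \<mu> (cball x R)"
    by (subst nn_integral_add) (auto simp: nn_integral_cmult_indicator)
  also have "\<dots> < \<infinity>"
    using ball_integrable ball_finite by (simp add: ennreal_mult_less_top less_top)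
  finally show ?thesis .
qed

lemma
  assumes "r \<le> R"
  shows ball_finite_below: "emeasure \<mu> (cball x r) < \<infinity>"
    and dev_int_finite_below: "dev_int \<mu> \<eta> x r < \<infinity>"
  using emeasure_cball_mono[OF sets_eq assms, of x] ball_finite
    emeasure_cball_mono[OF sets_deviation assms, of x] dev_int_R_finite
  unfolding dev_int_eq_deviation by (auto intro: le_less_trans)

lemma V_pos: "0 < r \<Longrightarrow> r \<le> R \<Longrightarrow> 0 < V r"
  unfolding measure_def using ball_pos ball_finite_below by (auto simp: enn2real_positive_iff)

lemma D_pos: "0 < r \<Longrightarrow> r \<le> R \<Longrightarrow> 0 < D r"
  using dev_int_pos dev_int_finite_below by (auto simp: enn2real_positive_iff)

lemma V_mono: "s \<le> t \<Longrightarrow> t \<le> R \<Longrightarrow> V s \<le> V t"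
  using ball_finite_below[of t]
  by (intro measure_mono_fmeasurable subset_cball) (auto intro!: fmeasurableI)

lemma alphaM_eq:
  assumes "r \<le> R"
  shows "alphaM \<mu> \<eta> x \<alpha> r = ennreal (M \<alpha> r)"
  using ball_finite_below[OF assms] dev_int_finite_below[OF assms]
  unfolding alphaM_def measure_def by (simp add: less_top)

lemma alphaM_mono:
  assumes "0 \<le> \<alpha>" "\<alpha> \<le> 1"
  shows "mono (alphaM \<mu> \<eta> x \<alpha>)"
proof (rule monoI)
  fix s t :: real assume "s \<le> t"
  then have dev: "dev_int \<mu> \<eta> x s \<le> dev_int \<mu> \<eta> x t"
    and vol: "emeasure \<mu> (cball x s) \<le> emeasure \<mu> (cball x t)"
    unfolding dev_int_eq_deviation using emeasure_cball_mono sets_deviation sets_eq by blast+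
  show "alphaM \<mu> \<eta> x \<alpha> s \<le> alphaM \<mu> \<eta> x \<alpha> t"
  proof (cases "dev_int \<mu> \<eta> x t = \<infinity> \<or> emeasure \<mu> (cball x t) = \<infinity>")
    case True
    then show ?thesis
      unfolding alphaM_def[of _ _ _ _ t] by simp
  next
    case False
    then have "dev_int \<mu> \<eta> x s \<noteq> \<infinity>" "emeasure \<mu> (cball x s) \<noteq> \<infinity>"
      using dev vol by (auto simp: top_unique)
    moreover have "D s \<le> D t" "V s \<le> V t"
      unfolding measure_def using dev vol False by (auto intro!: enn2real_mono simp: less_top)
    then have "M \<alpha> s \<le> M \<alpha> t"
      using assms by (intro mult_mono powr_mono2) auto
    ultimately show ?thesis
      unfolding alphaM_def using False by (simp add: ennreal_leI)
  qed
qed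

lemma alphaM_zero: "alphaM \<mu> \<eta> x \<alpha> 0 = 0"
proof - \<comment> \<open>\<open>0 powr a = 0\<close> for every \<open>a\<close>, so \<open>V 0 = 0\<close> suffices\<close>
  have "V 0 = 0"
    using centre_null by (simp add: measure_def)
  then show ?thesis
    using alphaM_eq[of 0] R_pos by simp
qed

lemma M_tendsto_at_right:
  assumes "0 < \<alpha>" "\<alpha> < 1" "0 \<le> c" "c < R"
  shows "(M \<alpha> \<longlongrightarrow> M \<alpha> c) (at_right c)"
proof -
  have "(D \<longlongrightarrow> D c) (at_right c)"
    unfolding D_eq_deviation
    using tendsto_measure_cball_at_right[OF sets_deviation _ \<open>c < R\<close>] dev_int_R_finite
    unfolding dev_int_eq_deviation by blast
  moreover have "(V \<longlongrightarrow> V c) (at_right c)"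
    using tendsto_measure_cball_at_right[OF sets_eq ball_finite \<open>c < R\<close>] .
  ultimately show ?thesis
    using assms by (intro tendsto_mult tendsto_powr') auto
qed

lemma alphaM_tendsto_at_right:
  assumes "0 < \<alpha>" "\<alpha> < 1" "0 \<le> c" "c < R"
  shows "(alphaM \<mu> \<eta> x \<alpha> \<longlongrightarrow> alphaM \<mu> \<eta> x \<alpha> c) (at_right c)"
proof -
  have "((\<lambda>r. ennreal (M \<alpha> r)) \<longlongrightarrow> alphaM \<mu> \<eta> x \<alpha> c) (at_right c)"
    using M_tendsto_at_right[OF assms] alphaM_eq[of c] assms by simp
  moreover have "\<forall>\<^sub>F r in at_right c. ennreal (M \<alpha> r) = alphaM \<mu> \<eta> x \<alpha> r"
    using \<open>c < R\<close> unfolding eventually_at_right_field by (auto intro!: exI[of _ R] alphaM_eq[symmetric])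
  ultimately show ?thesis
    by (rule Lim_transform_eventually)
qed

lemma alphaM_pos:
  assumes "0 < \<alpha>" "\<alpha> < 1" "0 < s"
  shows "0 < alphaM \<mu> \<eta> x \<alpha> s"
proof -
  have "0 < alphaM \<mu> \<eta> x \<alpha> (min s R)"
    using alphaM_eq[of "min s R"] D_pos[of "min s R"] V_pos[of "min s R"] assms R_pos by simp
  also have "\<dots> \<le> alphaM \<mu> \<eta> x \<alpha> s"
    using alphaM_mono assms by (simp add: monoD)
  finally show ?thesis .
qed

lemma level_threshold_alphaM:
  assumes "0 < \<alpha>" "\<alpha> < 1" "0 < R1" "R1 < R" "m1 = nat \<lceil>1 / enn2real (alphaM \<mu> \<eta> x \<alpha> R1)\<rceil>"
  shows "level_threshold (alphaM \<mu> \<eta> x \<alpha>) R1 m1"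
proof
  show "mono (alphaM \<mu> \<eta> x \<alpha>)"
    using assms by (intro alphaM_mono) auto
  show "((alphaM \<mu> \<eta> x \<alpha>) \<longlongrightarrow> 0) (at_right 0)"
    using alphaM_tendsto_at_right[of \<alpha> 0] assms R_pos by (simp add: alphaM_zero)
  show "alphaM \<mu> \<eta> x \<alpha> R1 < \<infinity>"
    using alphaM_eq[of R1] assms by simp
qed (use assms alphaM_pos alphaM_tendsto_at_right in auto)

lemma ball_avg_nonneg: "0 \<le> ball_avg \<mu> \<eta> x r"
  unfolding ball_avg_def by simp

lemma ball_avg_le_if_alphaM_le:
  assumes "0 < \<alpha>" "\<alpha> < 1" "0 < t" "t \<le> s" "s \<le> R"
    and le: "alphaM \<mu> \<eta> x \<alpha> s \<le> 2 * alphaM \<mu> \<eta> x \<alpha> t"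
  shows "ball_avg \<mu> \<eta> x s \<le> 2 powr (1 / \<alpha>) * ball_avg \<mu> \<eta> x t"
proof -
  have "ennreal (M \<alpha> s) \<le> ennreal (2 * M \<alpha> t)"
    using le assms by (simp add: alphaM_eq ennreal_mult)
  then have "M \<alpha> s \<le> 2 * M \<alpha> t"
    by (simp add: ennreal_le_iff)
  then show ?thesis
    unfolding ball_avg_def using assms
    by (intro ratio_le_of_powr_product_le D_pos V_pos V_mono) auto
qed

lemma alpha_sequence_along_if_lebesgue_point:
  assumes lp: "lebesgue_point \<mu> \<eta> x" and \<alpha>: "0 < \<alpha>" "\<alpha> < 1"
  shows "\<exists>r m1. alpha_sequence \<mu> \<eta> x R \<alpha> r m1 \<and> lebesgue_point_along \<mu> \<eta> x r m1"
proof -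
  let ?f = "alphaM \<mu> \<eta> x \<alpha>"
  have "\<forall>\<^sub>F s in at_right 0. ?f s < ?f R"
    using alphaM_tendsto_at_right[of \<alpha> 0] alphaM_pos[of \<alpha> R] \<alpha> R_pos
    by (intro order_tendstoD(2)) (auto simp: alphaM_zero)
  then obtain b where b: "0 < b" "\<And>s. 0 < s \<Longrightarrow> s < b \<Longrightarrow> ?f s < ?f R"
    unfolding eventually_at_right_field by blast
  define R1 where "R1 = min b R / 2"
  have R1: "0 < R1" "R1 < R" "?f R1 < ?f R"
    using b R_pos unfolding R1_def by auto
  define m1 where "m1 = nat \<lceil>1 / enn2real (?f R1)\<rceil>"
  define r where "r = level_sup ?f"
  interpret level_threshold ?f R1 m1
    using level_threshold_alphaM \<alpha> R1 m1_def by blast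
  have "alpha_sequence \<mu> \<eta> x R \<alpha> r m1"
    unfolding alpha_sequence_def r_def level_sup_def m1_def using R1 by blast
  moreover have "filterlim r (at_right 0) sequentially"
    unfolding r_def using level_sup_tendsto_zero level_sup_pos
    by (intro tendsto_imp_filterlim_at_right) (auto simp: eventually_sequentially)
  then have "(\<lambda>m. ball_avg \<mu> \<eta> x (r m)) \<longlonglongrightarrow> 0"
    using lp unfolding lebesgue_point_def by (rule filterlim_compose[rotated])
  ultimately show ?thesis
    unfolding lebesgue_point_along_def r_def using level_sup_pos level_sup_tendsto_zero by blast
qed

lemma lebesgue_point_if_along_alpha_sequence:
  assumes \<alpha>: "0 < \<alpha>" "\<alpha> < 1" and seq: "alpha_sequence \<mu> \<eta> x R \<alpha> r m1"
    and along: "lebesgue_point_along \<mu> \<eta> x r m1"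
  shows "lebesgue_point \<mu> \<eta> x"
proof -
  let ?f = "alphaM \<mu> \<eta> x \<alpha>"
  obtain R1 where R1: "0 < R1" "R1 < R" and m1: "m1 = nat \<lceil>1 / enn2real (?f R1)\<rceil>"
    and r: "\<And>m. m1 \<le> m \<Longrightarrow> r m = level_sup ?f m"
    using seq unfolding alpha_sequence_def level_sup_def by blast
  interpret level_threshold ?f R1 m1
    using level_threshold_alphaM \<alpha> R1 m1 by blast
  define C where "C = 2 powr (1 / \<alpha>)"
  have "C > 0"
    unfolding C_def by simp
  show ?thesis
    unfolding lebesgue_point_def
  proof (rule order_tendstoI)
    fix a :: real assume "a < 0"
    then show "\<forall>\<^sub>F s in at_right 0. a < ball_avg \<mu> \<eta> x s"
      using ball_avg_nonneg less_le_trans by (intro always_eventually allI) blast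
  next
    fix e :: real assume "0 < e"
    have "(\<lambda>m. ball_avg \<mu> \<eta> x (r m)) \<longlonglongrightarrow> 0"
      using along unfolding lebesgue_point_along_def by blast
    then obtain N where N: "\<And>n. N \<le> n \<Longrightarrow> ball_avg \<mu> \<eta> x (r n) < e / C"
      using order_tendstoD(2)[of _ 0 sequentially "e / C"] \<open>0 < e\<close> \<open>C > 0\<close>
      by (auto simp: eventually_sequentially)
    have "\<forall>\<^sub>F s in at_right 0. s < R"
      unfolding eventually_at_right_field using R_pos by blast
    with eventually_at_right_less eventually_level_sup_bracket[of "max N m1"]
    show "\<forall>\<^sub>F s in at_right 0. ball_avg \<mu> \<eta> x s < e"
    proof eventually_elim
      case (elim s)
      then obtain n where n: "max N m1 \<le> n" "r n \<le> s" "?f s \<le> 2 * ?f (r n)"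
        using r by auto
      have "0 < r n"
        using level_sup_pos[of n] r[of n] n(1) by auto
      then have "ball_avg \<mu> \<eta> x s \<le> C * ball_avg \<mu> \<eta> x (r n)"
        unfolding C_def using elim n \<alpha> by (intro ball_avg_le_if_alphaM_le) auto
      also have "\<dots> < C * (e / C)"
        using N[of n] n(1) \<open>C > 0\<close> by (intro mult_strict_left_mono) auto
      finally show ?case
        using \<open>C > 0\<close> by simp
    qed
  qed
qed

end

theorem mainTheorem14:
  fixes \<mu> :: "'a::metric_space measure" and \<eta> :: "'a \<Rightarrow> real" and x :: 'a and R :: real
  assumes "sets \<mu> = sets borel"
    and "\<eta> \<in> borel_measurable \<mu>"
    and "\<forall>r>0. emeasure \<mu> (cball x r) > 0"
    and "R > 0"
    and "emeasure \<mu> (cball x R) < \<infinity>"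
    and "(\<integral>\<^sup>+ y \<in> cball x R. ennreal \<bar>\<eta> y\<bar> \<partial>\<mu>) < \<infinity>"
    and "emeasure \<mu> {x} = 0"
    and "\<forall>r>0. dev_int \<mu> \<eta> x r > 0"
  shows "lebesgue_point \<mu> \<eta> x \<longleftrightarrow>
    (\<exists>\<alpha>. 0 < \<alpha> \<and> \<alpha> < 1 \<and>
       (\<exists>r m1. alpha_sequence \<mu> \<eta> x R \<alpha> r m1 \<and> lebesgue_point_along \<mu> \<eta> x r m1))"
proof -
  interpret ball_setting \<mu> \<eta> x R
    using assms by unfold_locales auto
  show ?thesis
  proof
    assume "lebesgue_point \<mu> \<eta> x"
    then show "\<exists>\<alpha>. 0 < \<alpha> \<and> \<alpha> < 1 \<and>
       (\<exists>r m1. alpha_sequence \<mu> \<eta> x R \<alpha> r m1 \<and> lebesgue_point_along \<mu> \<eta> x r m1)"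
      using alpha_sequence_along_if_lebesgue_point[of "1 / 2"] by (intro exI[of _ "1 / 2"]) auto
  qed (use lebesgue_point_if_along_alpha_sequence in blast)
qed

end
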